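(* Let $t\in[0,1]$. For every $\eta\in(0,1)$ there exists a constant $c_\eta>0$ depending only on $\eta$ such that for any $n,p$ and any fixed design $\boldsymbol{X}\in\mathbb{R}^{n\times p}$, $$\mathcal{R}_{1+t,\boldsymbol{X}}\bigl(c_\eta n^{-t/(1+t)}\bigr)\ge 1-\eta.$$
   Context: Data: $\boldsymbol{Z}=\boldsymbol{X}\beta^Z+\boldsymbol{e}$ and $\boldsymbol{Y}=\boldsymbol{X}\beta+b\boldsymbol{Z}+\boldsymbol{\varepsilon}$ with $\beta,\beta^Z\in\mathbb{R}^p$, $b\in\mathbb{R}$, where $\varepsilon_1,\ldots,\varepsilon_n$ are i.i.d. from $\mathbb{P}_\varepsilon$ with mean $0$, $e_1,\ldots,e_n$ are i.i.d. from $\mathbb{P}_e$ with mean $0$, and $\boldsymbol\varepsilon$ is independent of $\boldsymbol e$. For $s>0$, $\mathcal{D}_s$ is the class of distributions of a random variable $\xi$ with $\mathbb{E}[\xi]=0$ and $1\le\mathbb{E}[|\xi|^s]\le2$; $\tilde{\mathcal{D}}$ is the class of distributions with $\mathbb{P}(|\xi|>1/2)>1/2$. $\mathbb{P}_{b}$ denotes the law of the data with coefficient $b$ (for given $\boldsymbol X,\beta,\beta^Z,\mathbb{P}_\varepsilon,\mathbb{P}_e$). With $\Phi$ the class of measurable functions of $(\boldsymbol{X},\boldsymbol{Z},\boldsymbol{Y})$ with values in $\{0,1\}$, the minimax testing risk is $$\mathcal{R}_{s,\boldsymbol{X}}(\tau):=\inf_{\varphi\in\Phi}\Bigl\{\sup_{\mathbb{P}_\varepsilon\in\mathcal{D}_s}\sup_{\mathbb{P}_e\in\mathcal{D}_1\cap\tilde{\mathcal{D}}}\sup_{\beta,\beta^Z\in\mathbb{R}^p}\mathbb{P}_0(\varphi=1)+\sup_{|b|\ge\tau}\sup_{\mathbb{P}_\varepsilon\in\mathcal{D}_s}\sup_{\mathbb{P}_e\in\mathcal{D}_1\cap\tilde{\mathcal{D}}}\sup_{\beta,\beta^Z\in\mathbb{R}^p}\mathbb{P}_b(\varphi=0)\Bigr\}.$$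 *)

theory Defs
  imports "HOL-Probability.Probability"
begin

definition real_dist :: "real measure \<Rightarrow> bool" where
  "real_dist M \<longleftrightarrow> prob_space M \<and> sets M = sets borel"

definition D_class :: "real \<Rightarrow> real measure set" where
  "D_class s = {M. real_dist M \<and> integrable M (\<lambda>x. x) \<and> integral\<^sup>L M (\<lambda>x. x) = 0
      \<and> 1 \<le> (\<integral>\<^sup>+ x. ennreal (\<bar>x\<bar> powr s) \<partial>M)
      \<and> (\<integral>\<^sup>+ x. ennreal (\<bar>x\<bar> powr s) \<partial>M) \<le> 2}"

definition D_tilde :: "real measure set" where
  "D_tilde = {M. real_dist M \<and> measure M {x \<in> space M. \<bar>x\<bar> > 1/2} > 1/2}"

text \<open>Sample space of the observed data (Z, Y), each a vector indexed by {..<n}.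
  The design X (an n x p matrix, entries X i j for i<n, j<p) is fixed.\<close>
definition data_space :: "nat \<Rightarrow> ((nat \<Rightarrow> real) \<times> (nat \<Rightarrow> real)) measure" where
  "data_space n = PiM {..<n} (\<lambda>_. borel) \<Otimes>\<^sub>M PiM {..<n} (\<lambda>_. borel)"

definition data_law ::
  "nat \<Rightarrow> nat \<Rightarrow> (nat \<Rightarrow> nat \<Rightarrow> real) \<Rightarrow> (nat \<Rightarrow> real) \<Rightarrow> (nat \<Rightarrow> real) \<Rightarrow> real
   \<Rightarrow> real measure \<Rightarrow> real measure \<Rightarrow> ((nat \<Rightarrow> real) \<times> (nat \<Rightarrow> real)) measure" where
  "data_law n p X \<beta> \<beta>Z b Peps Pe =
     distr (PiM {..<n} (\<lambda>_. Pe) \<Otimes>\<^sub>M PiM {..<n} (\<lambda>_. Peps)) (data_space n)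
       (\<lambda>(e, eps).
          let Z = restrict (\<lambda>i. (\<Sum>j<p. X i j * \<beta>Z j) + e i) {..<n}
          in (Z, restrict (\<lambda>i. (\<Sum>j<p. X i j * \<beta> j) + b * Z i + eps i) {..<n}))"

text \<open>Tests: measurable {0,1}-valued functions of the data (True = reject = 1).\<close>
definition tests :: "nat \<Rightarrow> (((nat \<Rightarrow> real) \<times> (nat \<Rightarrow> real)) \<Rightarrow> bool) set" where
  "tests n = measurable (data_space n) (count_space UNIV)"

definition type1_err ::
  "real \<Rightarrow> nat \<Rightarrow> nat \<Rightarrow> (nat \<Rightarrow> nat \<Rightarrow> real) \<Rightarrow> (((nat \<Rightarrow> real) \<times> (nat \<Rightarrow> real)) \<Rightarrow> bool) \<Rightarrow> real" where
  "type1_err s n p X \<phi> = Sup {measure (data_law n p X \<beta> \<beta>Z 0 Peps Pe) {w \<in> space (data_space n). \<phi> w} | Peps Pe \<beta> \<beta>Z.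
        Peps \<in> D_class s \<and> Pe \<in> D_class 1 \<inter> D_tilde}"

definition type2_err ::
  "real \<Rightarrow> nat \<Rightarrow> nat \<Rightarrow> (nat \<Rightarrow> nat \<Rightarrow> real) \<Rightarrow> real \<Rightarrow> (((nat \<Rightarrow> real) \<times> (nat \<Rightarrow> real)) \<Rightarrow> bool) \<Rightarrow> real" where
  "type2_err s n p X \<tau> \<phi> = Sup {measure (data_law n p X \<beta> \<beta>Z b Peps Pe) {w \<in> space (data_space n). \<not> \<phi> w} | b Peps Pe \<beta> \<beta>Z.
        \<bar>b\<bar> \<ge> \<tau> \<and> Peps \<in> D_class s \<and> Pe \<in> D_class 1 \<inter> D_tilde}"

definition minimax_risk ::
  "real \<Rightarrow> nat \<Rightarrow> nat \<Rightarrow> (nat \<Rightarrow> nat \<Rightarrow> real) \<Rightarrow> real \<Rightarrow> real" where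
  "minimax_risk s n p X \<tau> = Inf {type1_err s n p X \<phi> + type2_err s n p X \<tau> \<phi> | \<phi>. \<phi> \<in> tests n}"

end

theory Submission
  imports Defs
begin

(*
  A two-point argument with a coupling.  Let e take the value 1 with probability 1 - r and
  -(1 - r)/r with probability r, and let xi be a Rademacher sign.  Under the null take Z = e and
  Y = b e' + xi with e' an independent copy of e; under the alternative take Z = e and
  Y = b Z + xi.  The design noise e lies in D_1 and in the tilde class, and both response noises
  lie in D_s (1 <= s <= 2) as soon as b and r (b/r)^s are small.  Driving both experiments by the
  same (e, e', xi), the data coincide unless some e_i or e'_i differs from 1, an event of
  probability at most 2 r n; so every test has error sum at least 1 - 2 r n.  Taking
  r = eta/(8 (n + 1)) and b = c n^(-t/(1+t)) gives r (b/r)^(1+t) = c (c/(r n))^t <= c.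
*)

section \<open>Power inequalities\<close>

lemma rademacher_shift_moment_ge:
  fixes y s :: real
  assumes "1 \<le> s"
  shows "2 \<le> \<bar>y + 1\<bar> powr s + \<bar>y - 1\<bar> powr s"
proof (cases "\<bar>y\<bar> < 1")
  case True
  have "convex_on {0<..} (\<lambda>x::real. x powr s)"
    using powr_convex assms by blast
  then have "((1 - 1/2) *\<^sub>R (y + 1) + (1/2) *\<^sub>R (1 - y)) powr s
      \<le> (1 - 1/2) * (y + 1) powr s + (1/2) * (1 - y) powr s"
    by (rule convex_onD) (use True in auto)
  moreover have "(1 - 1/2) *\<^sub>R (y + 1) + (1/2) *\<^sub>R (1 - y) = (1::real)"
    by (simp add: field_simps)
  moreover have "\<bar>y + 1\<bar> = y + 1" "\<bar>y - 1\<bar> = 1 - y"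
    using True by auto
  ultimately show ?thesis
    by simp
next
  case False
  have "2 \<le> x powr s" if "2 \<le> x" for x :: real
    using powr_mono[of 1 s x] assms that by simp
  moreover have "2 \<le> \<bar>y + 1\<bar> \<or> 2 \<le> \<bar>y - 1\<bar>"
    using False by auto
  ultimately show ?thesis
    by (smt (verit) powr_ge_zero)
qed

lemma rademacher_shift_moment_le:
  fixes y s :: real
  assumes "0 \<le> s"
  shows "\<bar>y + 1\<bar> powr s + \<bar>y - 1\<bar> powr s \<le> 2 * (1 + \<bar>y\<bar>) powr s"
proof -
  have "\<bar>y + 1\<bar> powr s \<le> (1 + \<bar>y\<bar>) powr s" "\<bar>y - 1\<bar> powr s \<le> (1 + \<bar>y\<bar>) powr s"
    using assms by (intro powr_mono2; simp)+
  then show ?thesis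
    by simp
qed

lemma one_plus_powr_le_linear:
  fixes b s :: real
  assumes "s \<le> 2" and "0 \<le> b" "b \<le> 1"
  shows "(1 + b) powr s \<le> 1 + 3 * b"
proof -
  have "(1 + b) powr s \<le> (1 + b) powr (2::nat)"
    using powr_mono[of s 2 "1 + b"] assms by simp
  also have "\<dots> = 1 + 2 * b + b * b"
    using assms by (simp add: powr_realpow power2_eq_square algebra_simps)
  also have "\<dots> \<le> 1 + 3 * b"
    using assms mult_left_le_one_le[of b b] by simp
  finally show ?thesis .
qed

lemma one_plus_powr_le:
  fixes x s :: real
  assumes "0 \<le> x" "0 \<le> s"
  shows "(1 + x) powr s \<le> 2 powr s * (1 + x powr s)"
proof (cases "x \<le> 1")
  case True
  then have "(1 + x) powr s \<le> 2 powr s"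
    using assms by (intro powr_mono2) auto
  then show ?thesis
    by (smt (verit) mult_le_cancel_left1 powr_ge_zero)
next
  case False
  then have "(1 + x) powr s \<le> (2 * x) powr s"
    using assms by (intro powr_mono2) auto
  also have "\<dots> = 2 powr s * x powr s"
    using assms by (simp add: powr_mult)
  finally show ?thesis
    by (smt (verit) mult_left_mono powr_ge_zero)
qed

lemma rademacher_shift_moment_le_linear:
  fixes y s :: real
  assumes "0 \<le> s" "s \<le> 2" "0 \<le> y" "y \<le> 1"
  shows "\<bar>y + 1\<bar> powr s + \<bar>y - 1\<bar> powr s \<le> 2 * (1 + 3 * y)"
  using rademacher_shift_moment_le[of s y] one_plus_powr_le_linear[of s y] assms by simp

lemma rademacher_shift_moment_le_powr:
  fixes y s K :: real
  assumes "0 \<le> s" "s \<le> 2" "\<bar>y\<bar> \<le> K"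
  shows "\<bar>y + 1\<bar> powr s + \<bar>y - 1\<bar> powr s \<le> 8 * (1 + K powr s)"
proof -
  have "2 powr s \<le> 4"
    using powr_mono[of s 2 2] assms by simp
  moreover have "\<bar>y\<bar> powr s \<le> K powr s"
    using assms by (intro powr_mono2) auto
  ultimately have "2 powr s * (1 + \<bar>y\<bar> powr s) \<le> 4 * (1 + K powr s)"
    by (intro mult_mono) auto
  then show ?thesis
    using rademacher_shift_moment_le[of s y] one_plus_powr_le[of "\<bar>y\<bar>" s] assms by simp
qed

lemma rate_moment_le:
  fixes c r t x :: real
  assumes c: "0 \<le> c" and r: "0 < r" and t: "0 \<le> t" and x: "0 < x" and cx: "c \<le> r * x"
  shows "r * (c * x powr (- t / (1 + t)) / r) powr (1 + t) \<le> c"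
proof -
  define a where "a = - t / (1 + t)"
  have "a * (1 + t) = - t"
    using t by (simp add: a_def)
  then have a: "a + a * t = - t"
    by (simp add: distrib_left)
  have "r * (c * x powr a / r) powr (1 + t) = c * x powr a * (c / r * x powr a) powr t"
    using c r by (simp add: powr_add)
  also have "\<dots> = c * (c / r) powr t * (x powr a * x powr (a * t))"
    using c r x by (subst powr_mult) (simp_all add: powr_powr)
  also have "\<dots> = c * (c / (r * x)) powr t"
    using c r x a by (simp add: powr_add[symmetric] powr_minus_divide powr_divide powr_mult)
  also have "\<dots> \<le> c * 1"
    using c r x cx powr_mono2[of t "c / (r * x)" 1] t by (intro mult_left_mono) (auto simp: field_simps)
  finally show ?thesis
    by (simp add: a_def)
qed

section \<open>Coupling and product measures\<close>

lemma (in prob_space) coupling_error_sum_ge: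
  assumes G0: "G0 \<in> measurable M N" and G1: "G1 \<in> measurable M N"
    and B: "B \<in> events" and agree: "\<And>\<omega>. \<omega> \<in> space M - B \<Longrightarrow> G0 \<omega> = G1 \<omega>"
    and S: "S \<in> sets N"
  shows "1 - prob B \<le> measure (distr M N G0) S + measure (distr M N G1) (space N - S)"
proof -
  define A0 where "A0 = G0 -` S \<inter> space M"
  define A1 where "A1 = G1 -` (space N - S) \<inter> space M"
  have events: "A0 \<in> events" "A1 \<in> events"
    unfolding A0_def A1_def using G0 G1 S by (auto intro: measurable_sets)
  have "space M \<subseteq> A0 \<union> A1 \<union> B"
    using agree measurable_space[OF G0] by (fastforce simp: A0_def A1_def)
  then have "1 \<le> prob (A0 \<union> A1 \<union> B)"
    using events B finite_measure_mono[of "space M" "A0 \<union> A1 \<union> B"] by (simp add: prob_space)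
  also have "\<dots> \<le> prob (A0 \<union> A1) + prob B"
    using events B by (intro measure_subadditive) auto
  also have "\<dots> \<le> prob A0 + prob A1 + prob B"
    using events measure_subadditive[of A0 M A1] by simp
  finally show ?thesis
    using G0 G1 S by (simp add: A0_def A1_def measure_distr)
qed

lemma (in pair_prob_space) measure_pair_measure_Times:
  assumes "A \<in> sets M1" "B \<in> sets M2"
  shows "measure (M1 \<Otimes>\<^sub>M M2) (A \<times> B) = measure M1 A * measure M2 B"
  using assms by (simp add: measure_def M2.emeasure_pair_measure_Times enn2real_mult)

lemma
  assumes "i \<in> I" "A \<in> sets M"
  shows sets_PiM_component: "{x \<in> space (PiM I (\<lambda>_. M)). x i \<in> A} \<in> sets (PiM I (\<lambda>_. M))"
    and measure_PiM_component:
      "prob_space M \<Longrightarrow> measure (PiM I (\<lambda>_. M)) {x \<in> space (PiM I (\<lambda>_. M)). x i \<in> A} = measure M A"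
proof -
  have component: "(\<lambda>x. x i) \<in> measurable (PiM I (\<lambda>_. M)) M"
    using assms(1) by (rule measurable_component_singleton)
  have preimage: "{x \<in> space (PiM I (\<lambda>_. M)). x i \<in> A} = (\<lambda>x. x i) -` A \<inter> space (PiM I (\<lambda>_. M))"
    by auto
  show "{x \<in> space (PiM I (\<lambda>_. M)). x i \<in> A} \<in> sets (PiM I (\<lambda>_. M))"
    unfolding preimage using component assms(2) by (rule measurable_sets)
  assume "prob_space M"
  then have "measure M A = measure (distr (PiM I (\<lambda>_. M)) M (\<lambda>x. x i)) A"
    using assms distr_PiM_component[of I "\<lambda>_. M" i] by simp
  also have "\<dots> = measure (PiM I (\<lambda>_. M)) {x \<in> space (PiM I (\<lambda>_. M)). x i \<in> A}"
    unfolding preimage using component assms(2) by (rule measure_distr)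
  finally show "measure (PiM I (\<lambda>_. M)) {x \<in> space (PiM I (\<lambda>_. M)). x i \<in> A} = measure M A" ..
qed

lemma measurable_compose_PiM:
  assumes [measurable]: "h \<in> measurable W Q"
  shows "compose I h \<in> measurable (PiM I (\<lambda>_. W)) (PiM I (\<lambda>_. Q))"
  unfolding compose_def by measurable

section \<open>The two-point noise distributions\<close>

definition coin_pair :: "real \<Rightarrow> (bool \<times> bool) pmf" where
  "coin_pair r = pair_pmf (bernoulli_pmf (1 - r)) (bernoulli_pmf (1/2))"

lemma integral_coin_pair:
  fixes f :: "bool \<times> bool \<Rightarrow> real"
  assumes "0 \<le> r" "r \<le> 1"
  shows "(\<integral>w. f w \<partial>coin_pair r)
    = (1 - r) / 2 * (f (True, True) + f (True, False)) + r / 2 * (f (False, True) + f (False, False))"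
  using assms
  by (subst integral_measure_pmf_real[of "{(True, True), (True, False), (False, True), (False, False)}"])
    (auto simp: coin_pair_def pmf_pair algebra_simps)

lemma nn_integral_coin_pair:
  fixes f :: "bool \<times> bool \<Rightarrow> real"
  assumes "\<And>w. 0 \<le> f w"
  shows "(\<integral>\<^sup>+w. ennreal (f w) \<partial>coin_pair r) = ennreal (\<integral>w. f w \<partial>coin_pair r)"
  using assms by (intro nn_integral_eq_integral integrable_measure_pmf_finite) auto

lemma measure_coin_pair_not_fst:
  assumes "0 \<le> r" "r \<le> 1"
  shows "measure (coin_pair r) {w. \<not> fst w} = r"
proof -
  have "{w. \<not> fst w} = {(False, True), (False, False)}"
    by auto
  then show ?thesis
    using assms by (simp add: measure_measure_pmf_finite coin_pair_def pmf_pair)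
qed

definition coin_law :: "real \<Rightarrow> (bool \<times> bool \<Rightarrow> real) \<Rightarrow> real measure" where
  "coin_law r h = distr (coin_pair r) borel h"

lemma real_dist_coin_law: "real_dist (coin_law r h)"
  by (simp add: real_dist_def coin_law_def prob_space.prob_space_distr prob_space_measure_pmf)

lemma coin_law_in_D_class:
  assumes "\<integral>w. h w \<partial>coin_pair r = 0"
    and "1 \<le> (\<integral>w. \<bar>h w\<bar> powr s \<partial>coin_pair r)" "(\<integral>w. \<bar>h w\<bar> powr s \<partial>coin_pair r) \<le> 2"
  shows "coin_law r h \<in> D_class s"
proof -
  have "integrable (coin_law r h) (\<lambda>x. x)"
    unfolding coin_law_def
    by (subst integrable_distr_eq) (auto intro: integrable_measure_pmf_finite)
  moreover have "(\<integral>x. x \<partial>coin_law r h) = (\<integral>w. h w \<partial>coin_pair r)"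
    unfolding coin_law_def by (subst integral_distr) auto
  moreover have "(\<integral>\<^sup>+x. ennreal (\<bar>x\<bar> powr s) \<partial>coin_law r h) = ennreal (\<integral>w. \<bar>h w\<bar> powr s \<partial>coin_pair r)"
    unfolding coin_law_def by (subst nn_integral_distr) (auto intro: nn_integral_coin_pair)
  ultimately show ?thesis
    using assms real_dist_coin_law ennreal_leI[of 1] ennreal_leI[of _ 2] by (auto simp: D_class_def)
qed

definition spike :: "real \<Rightarrow> bool \<Rightarrow> real" where
  "spike r u = (if u then 1 else - (1 - r) / r)"

definition sign_of :: "bool \<Rightarrow> real" where
  "sign_of v = (if v then 1 else - 1)"

lemma spike_True [simp]: "spike r True = 1"
  and sign_of_simps [simp]: "sign_of True = 1" "sign_of False = - 1"
  by (simp_all add: spike_def sign_of_def)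

lemma mult_spike_False: "0 < r \<Longrightarrow> r * spike r False = r - 1"
  by (simp add: spike_def)

lemma abs_spike_False: "0 < r \<Longrightarrow> r \<le> 1 \<Longrightarrow> \<bar>spike r False\<bar> = (1 - r) / r"
  by (simp add: spike_def)

definition spike_law :: "real \<Rightarrow> real measure" where
  "spike_law r = coin_law r (\<lambda>w. spike r (fst w))"

definition noise_law :: "real \<Rightarrow> real \<Rightarrow> real measure" where
  "noise_law b r = coin_law r (\<lambda>w. b * spike r (fst w) + sign_of (snd w))"

lemma spike_law_in_D_class_D_tilde:
  assumes "0 < r" "r \<le> 1/2"
  shows "spike_law r \<in> D_class 1 \<inter> D_tilde"
proof
  show "spike_law r \<in> D_class 1"
    unfolding spike_law_def using assms
    by (intro coin_law_in_D_class; simp add: integral_coin_pair mult_spike_False abs_spike_False; simp add: field_simps)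
  have "\<bar>spike r u\<bar> > 1/2" for u
    using assms by (cases u) (simp_all add: abs_spike_False field_simps)
  then have "measure (spike_law r) {x \<in> space (spike_law r). \<bar>x\<bar> > 1/2} = measure (coin_pair r) UNIV"
    unfolding spike_law_def coin_law_def by (subst measure_distr) auto
  then show "spike_law r \<in> D_tilde"
    using real_dist_coin_law by (simp add: D_tilde_def spike_law_def)
qed

lemma measure_spike_law_ne_1:
  assumes "0 < r" "r \<le> 1"
  shows "measure (spike_law r) (- {1}) = r"
proof -
  have "spike r False \<noteq> 1"
    using assms by (simp add: spike_def field_simps)
  then have "(\<lambda>w. spike r (fst w)) -` (- {1}) \<inter> space (coin_pair r) = {w. \<not> fst w}"
    by auto
  then show ?thesis
    using assms measure_coin_pair_not_fst[of r]
    by (simp add: spike_law_def coin_law_def measure_distr)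
qed

lemma noise_law_in_D_class:
  assumes s: "1 \<le> s" "s \<le> 2" and b: "0 \<le> b" "b \<le> 1/16" and r: "0 < r" "r \<le> 1/8"
    and moment_br: "r * (b / r) powr s \<le> 1/16"
  shows "noise_law b r \<in> D_class s"
  unfolding noise_law_def
proof (rule coin_law_in_D_class)
  define G where "G y = \<bar>y + 1\<bar> powr s + \<bar>y - 1\<bar> powr s" for y
  define y where "y = b * spike r False"
  have moment: "(\<integral>w. \<bar>b * spike r (fst w) + sign_of (snd w)\<bar> powr s \<partial>coin_pair r)
      = (1 - r) / 2 * G b + r / 2 * G y"
    using r by (simp add: integral_coin_pair G_def y_def)
  have "b * ((1 - r) / r) \<le> b * (1 / r)"
    using r b by (intro mult_left_mono divide_right_mono) auto
  then have y: "\<bar>y\<bar> \<le> b / r"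
    using r b by (simp add: y_def abs_mult abs_spike_False)
  have "G b \<ge> 2" "G y \<ge> 2"
    unfolding G_def using s by (simp_all add: rademacher_shift_moment_ge)
  show "1 \<le> (\<integral>w. \<bar>b * spike r (fst w) + sign_of (snd w)\<bar> powr s \<partial>coin_pair r)"
  proof -
    have "1 - r \<le> (1 - r) / 2 * G b" "r \<le> r / 2 * G y"
      using mult_left_mono[OF \<open>G b \<ge> 2\<close>, of "(1 - r) / 2"] mult_left_mono[OF \<open>G y \<ge> 2\<close>, of "r / 2"] r
      by simp_all
    then show ?thesis
      unfolding moment by linarith
  qed
  have "G b \<le> 2 * (1 + 3 * b)"
    unfolding G_def using s b by (intro rademacher_shift_moment_le_linear) auto
  moreover have "G y \<le> 8 * (1 + (b / r) powr s)"
    unfolding G_def using s y by (intro rademacher_shift_moment_le_powr) auto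
  ultimately have "(1 - r) / 2 * G b \<le> (1 - r) / 2 * (2 * (1 + 3 * b))"
      "r / 2 * G y \<le> r / 2 * (8 * (1 + (b / r) powr s))"
    using r by (intro mult_left_mono; simp)+
  moreover have "(1 - r) / 2 * (2 * (1 + 3 * b)) \<le> 1 + 3 * b"
    using r b mult_left_le_one_le[of "1 + 3 * b" "1 - r"] by simp
  moreover have "r / 2 * (8 * (1 + (b / r) powr s)) = 4 * r + 4 * (r * (b / r) powr s)"
    by (simp add: algebra_simps)
  ultimately show "(\<integral>w. \<bar>b * spike r (fst w) + sign_of (snd w)\<bar> powr s \<partial>coin_pair r) \<le> 2"
    unfolding moment using r b moment_br by linarith
  show "(\<integral>w. b * spike r (fst w) + sign_of (snd w) \<partial>coin_pair r) = 0"
    using r by (simp add: integral_coin_pair spike_def field_simps)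
qed

section \<open>The data law as an image measure\<close>

definition data_map ::
  "nat \<Rightarrow> nat \<Rightarrow> (nat \<Rightarrow> nat \<Rightarrow> real) \<Rightarrow> (nat \<Rightarrow> real) \<Rightarrow> (nat \<Rightarrow> real) \<Rightarrow> real
   \<Rightarrow> (nat \<Rightarrow> real) \<times> (nat \<Rightarrow> real) \<Rightarrow> (nat \<Rightarrow> real) \<times> (nat \<Rightarrow> real)" where
  "data_map n p X \<beta> \<beta>Z b = (\<lambda>(e, eps).
     let Z = restrict (\<lambda>i. (\<Sum>j<p. X i j * \<beta>Z j) + e i) {..<n}
     in (Z, restrict (\<lambda>i. (\<Sum>j<p. X i j * \<beta> j) + b * Z i + eps i) {..<n}))"

lemma data_law_eq_distr_data_map:
  "data_law n p X \<beta> \<beta>Z b Peps Pe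
     = distr (PiM {..<n} (\<lambda>_. Pe) \<Otimes>\<^sub>M PiM {..<n} (\<lambda>_. Peps)) (data_space n) (data_map n p X \<beta> \<beta>Z b)"
  by (simp add: data_law_def data_map_def)

lemma measurable_data_map:
  assumes "sets Pe = sets borel" "sets Peps = sets borel"
  shows "data_map n p X \<beta> \<beta>Z b \<in> measurable (PiM {..<n} (\<lambda>_. Pe) \<Otimes>\<^sub>M PiM {..<n} (\<lambda>_. Peps)) (data_space n)"
proof -
  have sets_eq: "sets (PiM {..<n} (\<lambda>_. Pe) \<Otimes>\<^sub>M PiM {..<n} (\<lambda>_. Peps))
      = sets (PiM {..<n} (\<lambda>_. borel) \<Otimes>\<^sub>M PiM {..<n} (\<lambda>_. (borel :: real measure)))"
    using assms by (intro sets_pair_measure_cong sets_PiM_cong) auto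
  have "data_map n p X \<beta> \<beta>Z b = (\<lambda>z. (restrict (\<lambda>i. (\<Sum>j<p. X i j * \<beta>Z j) + fst z i) {..<n},
      restrict (\<lambda>i. (\<Sum>j<p. X i j * \<beta> j) + b * ((\<Sum>j<p. X i j * \<beta>Z j) + fst z i) + snd z i) {..<n}))"
    by (auto simp: data_map_def Let_def fun_eq_iff split_beta')
  also have "\<dots> \<in> measurable (PiM {..<n} (\<lambda>_. borel) \<Otimes>\<^sub>M PiM {..<n} (\<lambda>_. borel)) (data_space n)"
    unfolding data_space_def by measurable
  finally show ?thesis
    using measurable_cong_sets[OF sets_eq refl] by blast
qed

lemma prob_space_data_law:
  assumes "real_dist Peps" "real_dist Pe"
  shows "prob_space (data_law n p X \<beta> \<beta>Z b Peps Pe)"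
proof -
  have "prob_space (PiM {..<n} (\<lambda>_. Pe) \<Otimes>\<^sub>M PiM {..<n} (\<lambda>_. Peps))"
    using assms by (auto simp: real_dist_def intro!: prob_space_pair prob_space_PiM)
  then show ?thesis
    unfolding data_law_eq_distr_data_map
    by (rule prob_space.prob_space_distr) (use assms measurable_data_map in \<open>auto simp: real_dist_def\<close>)
qed

lemma measurable_data_map_noise:
  assumes "sets Pe = sets borel" "h \<in> borel_measurable W"
  shows "(\<lambda>(x, w). data_map n p X \<beta> \<beta>Z b (x, compose {..<n} h w))
    \<in> measurable (PiM {..<n} (\<lambda>_. Pe) \<Otimes>\<^sub>M PiM {..<n} (\<lambda>_. W)) (data_space n)"
proof -
  have "(\<lambda>(x, w). (x, compose {..<n} h w)) \<in> measurable
      (PiM {..<n} (\<lambda>_. Pe) \<Otimes>\<^sub>M PiM {..<n} (\<lambda>_. W)) (PiM {..<n} (\<lambda>_. Pe) \<Otimes>\<^sub>M PiM {..<n} (\<lambda>_. borel))"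
    using assms(2)
    by (auto intro!: measurable_Pair measurable_compose[OF measurable_snd] measurable_compose_PiM simp: split_beta')
  from measurable_comp[OF this measurable_data_map[OF assms(1) refl]] show ?thesis
    by (simp add: comp_def split_beta')
qed

lemma data_law_distr_noise:
  assumes Pe: "real_dist Pe" and W: "prob_space W" and h: "h \<in> borel_measurable W"
  shows "data_law n p X \<beta> \<beta>Z b (distr W borel h) Pe
    = distr (PiM {..<n} (\<lambda>_. Pe) \<Otimes>\<^sub>M PiM {..<n} (\<lambda>_. W)) (data_space n)
        (\<lambda>(x, w). data_map n p X \<beta> \<beta>Z b (x, compose {..<n} h w))"
proof -
  define Q where "Q = distr W borel h"
  define lift where "lift = (\<lambda>(x :: nat \<Rightarrow> real, w). (x, compose {..<n} h w))"
  have hQ: "h \<in> measurable W Q"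
    using h by (simp add: Q_def)
  have Q: "prob_space Q"
    unfolding Q_def using W h by (rule prob_space.prob_space_distr)
  have "distr W Q h = Q"
    unfolding Q_def by (rule distr_cong) auto
  then have noise: "distr (PiM {..<n} (\<lambda>_. W)) (PiM {..<n} (\<lambda>_. Q)) (compose {..<n} h) = PiM {..<n} (\<lambda>_. Q)"
    using distr_PiM_finite_prob_space'[of "{..<n}" "\<lambda>_. W" "\<lambda>_. Q" h] W Q hQ by simp
  have lift: "lift \<in> measurable (PiM {..<n} (\<lambda>_. Pe) \<Otimes>\<^sub>M PiM {..<n} (\<lambda>_. W))
      (PiM {..<n} (\<lambda>_. Pe) \<Otimes>\<^sub>M PiM {..<n} (\<lambda>_. Q))"
    using hQ
    by (auto intro!: measurable_Pair measurable_compose[OF measurable_snd] measurable_compose_PiM simp: lift_def split_beta')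
  have "PiM {..<n} (\<lambda>_. Pe) \<Otimes>\<^sub>M PiM {..<n} (\<lambda>_. Q)
      = distr (PiM {..<n} (\<lambda>_. Pe)) (PiM {..<n} (\<lambda>_. Pe)) (\<lambda>x. x)
          \<Otimes>\<^sub>M distr (PiM {..<n} (\<lambda>_. W)) (PiM {..<n} (\<lambda>_. Q)) (compose {..<n} h)"
    by (simp add: noise)
  also have "\<dots> = distr (PiM {..<n} (\<lambda>_. Pe) \<Otimes>\<^sub>M PiM {..<n} (\<lambda>_. W))
      (PiM {..<n} (\<lambda>_. Pe) \<Otimes>\<^sub>M PiM {..<n} (\<lambda>_. Q)) lift"
    unfolding lift_def using measurable_compose_PiM[OF hQ] Q noise
    by (intro pair_measure_distr) (auto intro: prob_space_imp_sigma_finite prob_space_PiM)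
  finally have "data_law n p X \<beta> \<beta>Z b Q Pe
      = distr (distr (PiM {..<n} (\<lambda>_. Pe) \<Otimes>\<^sub>M PiM {..<n} (\<lambda>_. W))
          (PiM {..<n} (\<lambda>_. Pe) \<Otimes>\<^sub>M PiM {..<n} (\<lambda>_. Q)) lift) (data_space n) (data_map n p X \<beta> \<beta>Z b)"
    by (simp add: data_law_eq_distr_data_map)
  also have "\<dots> = distr (PiM {..<n} (\<lambda>_. Pe) \<Otimes>\<^sub>M PiM {..<n} (\<lambda>_. W)) (data_space n)
      (data_map n p X \<beta> \<beta>Z b \<circ> lift)"
    using Pe lift by (intro distr_distr measurable_data_map) (auto simp: real_dist_def Q_def)
  finally show ?thesis
    by (simp add: Q_def lift_def comp_def split_beta')
qed

section \<open>The coupled null and alternative\<close>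

lemma prob_space_spike_law: "prob_space (spike_law r)"
  and sets_spike_law [simp]: "sets (spike_law r) = sets borel"
  using real_dist_coin_law by (simp_all add: spike_law_def real_dist_def)

lemma pair_prob_space_spike_coin:
  "pair_prob_space (PiM {..<n} (\<lambda>_. spike_law r)) (PiM {..<n} (\<lambda>_. measure_pmf (coin_pair r)))"
  by (intro pair_prob_space.intro pair_sigma_finite.intro prob_space_imp_sigma_finite prob_space_PiM
      prob_space_spike_law prob_space_measure_pmf)

lemma spike_failure_event:
  fixes n :: nat and r :: real
  assumes r: "0 < r" "r \<le> 1/2"
  defines "M1 \<equiv> PiM {..<n} (\<lambda>_. spike_law r)" and "M2 \<equiv> PiM {..<n} (\<lambda>_. measure_pmf (coin_pair r))"
  defines "B \<equiv> \<Union>i<n. {x \<in> space M1. x i \<noteq> 1} \<times> space M2 \<union> space M1 \<times> {w \<in> space M2. \<not> fst (w i)}"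
  shows "B \<in> sets (M1 \<Otimes>\<^sub>M M2)" and "measure (M1 \<Otimes>\<^sub>M M2) B \<le> 2 * r * n"
proof -
  interpret P: pair_prob_space M1 M2
    unfolding M1_def M2_def by (rule pair_prob_space_spike_coin)
  define C1 where "C1 i = {x \<in> space M1. x i \<in> - {1}}" for i
  define C2 where "C2 i = {w \<in> space M2. w i \<in> {u. \<not> fst u}}" for i
  have B_eq: "B = (\<Union>i<n. C1 i \<times> space M2 \<union> space M1 \<times> C2 i)"
    by (simp add: B_def C1_def C2_def)
  have C1: "C1 i \<in> sets M1" "measure M1 (C1 i) = r" if "i < n" for i
    using that r prob_space_spike_law sets_PiM_component[of i "{..<n}" "- {1}" "spike_law r"]
      measure_PiM_component[of i "{..<n}" "- {1}" "spike_law r"] measure_spike_law_ne_1[of r]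
    by (simp_all add: C1_def M1_def)
  have C2: "C2 i \<in> sets M2" "measure M2 (C2 i) = r" if "i < n" for i
    using that r sets_PiM_component[of i "{..<n}" "{u. \<not> fst u}" "coin_pair r"]
      measure_PiM_component[of i "{..<n}" "{u. \<not> fst u}" "coin_pair r"] measure_coin_pair_not_fst[of r]
    by (simp_all add: C2_def M2_def prob_space_measure_pmf)
  show "B \<in> sets (M1 \<Otimes>\<^sub>M M2)"
    unfolding B_eq using C1 C2 by (intro sets.countable_UN'' sets.Un pair_measureI) auto
  have "P.prob B \<le> (\<Sum>i<n. P.prob (C1 i \<times> space M2 \<union> space M1 \<times> C2 i))"
    unfolding B_eq using C1 C2 by (intro P.finite_measure_subadditive_finite) auto
  also have "\<dots> \<le> (\<Sum>i<n. P.prob (C1 i \<times> space M2) + P.prob (space M1 \<times> C2 i))"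
    using C1 C2 by (intro sum_mono measure_subadditive) auto
  also have "\<dots> = (\<Sum>i<n. 2 * r)"
    using C1 C2 by (simp add: P.measure_pair_measure_Times P.M1.prob_space P.M2.prob_space)
  finally show "P.prob B \<le> 2 * r * n"
    by (simp add: mult.commute)
qed

lemma null_alternative_error_sum_ge:
  assumes r: "0 < r" "r \<le> 1/2" and S: "S \<in> sets (data_space n)"
  shows "1 - 2 * r * n \<le>
    measure (data_law n p X (\<lambda>_. 0) (\<lambda>_. 0) 0 (noise_law b r) (spike_law r)) S
    + measure (data_law n p X (\<lambda>_. 0) (\<lambda>_. 0) b (noise_law 0 r) (spike_law r)) (space (data_space n) - S)"
proof -
  define M1 where "M1 = PiM {..<n} (\<lambda>_. spike_law r)"
  define M2 where "M2 = PiM {..<n} (\<lambda>_. measure_pmf (coin_pair r))"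
  define B where "B = (\<Union>i<n. {x \<in> space M1. x i \<noteq> 1} \<times> space M2 \<union> space M1 \<times> {w \<in> space M2. \<not> fst (w i)})"
  define noise where "noise c w = c * spike r (fst w) + sign_of (snd w)" for c w
  define G where "G c b' = (\<lambda>(x, w). data_map n p X (\<lambda>_. 0) (\<lambda>_. 0) b' (x, compose {..<n} (noise c) w))"
    for c b'
  interpret P: pair_prob_space M1 M2
    unfolding M1_def M2_def by (rule pair_prob_space_spike_coin)
  have law: "data_law n p X (\<lambda>_. 0) (\<lambda>_. 0) b' (noise_law c r) (spike_law r) = distr (M1 \<Otimes>\<^sub>M M2) (data_space n) (G c b')"
    for c b'
    unfolding noise_law_def coin_law_def G_def M1_def M2_def noise_def
    by (rule data_law_distr_noise) (auto simp: real_dist_def prob_space_spike_law prob_space_measure_pmf)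
  have G: "G c b' \<in> measurable (M1 \<Otimes>\<^sub>M M2) (data_space n)" for c b'
    unfolding G_def M1_def M2_def by (intro measurable_data_map_noise) auto
  have B: "B \<in> sets (M1 \<Otimes>\<^sub>M M2)" "measure (M1 \<Otimes>\<^sub>M M2) B \<le> 2 * r * n"
    unfolding M1_def M2_def B_def by (rule spike_failure_event[OF r])+
  (* off B every e_i and e'_i equals 1, so the null noise b e'_i + xi_i equals b Z_i + xi_i *)
  have "G b 0 z = G 0 b z" if "z \<in> space (M1 \<Otimes>\<^sub>M M2) - B" for z
  proof -
    obtain x w where z: "z = (x, w)" "x \<in> space M1" "w \<in> space M2"
      using \<open>z \<in> space (M1 \<Otimes>\<^sub>M M2) - B\<close> by (auto simp: space_pair_measure)
    then have "x i = 1 \<and> fst (w i)" if "i < n" for i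
      using \<open>z \<in> space (M1 \<Otimes>\<^sub>M M2) - B\<close> that by (auto simp: B_def)
    then show ?thesis
      by (auto simp: z G_def data_map_def compose_def noise_def fun_eq_iff)
  qed
  then show ?thesis
    using P.coupling_error_sum_ge[OF G[of b 0] G[of 0 b] B(1) _ S] B(2) unfolding law by fastforce
qed

section \<open>Lower bounds on the minimax risk\<close>

lemma measure_data_law_le_1:
  assumes "real_dist Peps" "real_dist Pe"
  shows "measure (data_law n p X \<beta> \<beta>Z b Peps Pe) A \<le> 1"
  using prob_space_data_law[OF assms] by (rule prob_space.prob_le_1)

lemma type1_err_ge:
  assumes "Peps \<in> D_class s" "Pe \<in> D_class 1 \<inter> D_tilde"
  shows "measure (data_law n p X \<beta> \<beta>Z 0 Peps Pe) {w \<in> space (data_space n). \<phi> w} \<le> type1_err s n p X \<phi>"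
  unfolding type1_err_def
proof (rule cSup_upper)
  show "bdd_above {measure (data_law n p X \<beta> \<beta>Z 0 Peps Pe) {w \<in> space (data_space n). \<phi> w} | Peps Pe \<beta> \<beta>Z.
      Peps \<in> D_class s \<and> Pe \<in> D_class 1 \<inter> D_tilde}"
    by (rule bdd_aboveI[of _ 1]) (auto simp: D_class_def intro: measure_data_law_le_1)
qed (use assms in blast)

lemma type2_err_ge:
  assumes "\<tau> \<le> \<bar>b\<bar>" "Peps \<in> D_class s" "Pe \<in> D_class 1 \<inter> D_tilde"
  shows "measure (data_law n p X \<beta> \<beta>Z b Peps Pe) {w \<in> space (data_space n). \<not> \<phi> w} \<le> type2_err s n p X \<tau> \<phi>"
  unfolding type2_err_def
proof (rule cSup_upper)
  show "bdd_above {measure (data_law n p X \<beta> \<beta>Z b Peps Pe) {w \<in> space (data_space n). \<not> \<phi> w} | b Peps Pe \<beta> \<beta>Z.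
      \<tau> \<le> \<bar>b\<bar> \<and> Peps \<in> D_class s \<and> Pe \<in> D_class 1 \<inter> D_tilde}"
    by (rule bdd_aboveI[of _ 1]) (auto simp: D_class_def intro: measure_data_law_le_1)
qed (use assms in blast)

lemma minimax_risk_ge:
  assumes "\<And>\<phi>. \<phi> \<in> tests n \<Longrightarrow> v \<le> type1_err s n p X \<phi> + type2_err s n p X \<tau> \<phi>"
  shows "v \<le> minimax_risk s n p X \<tau>"
  unfolding minimax_risk_def
proof (rule cInf_greatest)
  have "(\<lambda>_. True) \<in> tests n"
    by (simp add: tests_def)
  then show "{type1_err s n p X \<phi> + type2_err s n p X \<tau> \<phi> | \<phi>. \<phi> \<in> tests n} \<noteq> {}"
    by blast
qed (use assms in blast)

lemma minimax_risk_two_point_bound: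
  assumes s: "1 \<le> s" "s \<le> 2" and r: "0 < r" "r \<le> 1/8" and \<tau>: "0 \<le> \<tau>" "\<tau> \<le> 1/16"
    and moment: "r * (\<tau> / r) powr s \<le> 1/16"
  shows "1 - 2 * r * n \<le> minimax_risk s n p X \<tau>"
proof (rule minimax_risk_ge)
  fix \<phi> assume "\<phi> \<in> tests n"
  then have S: "{w \<in> space (data_space n). \<phi> w} \<in> sets (data_space n)"
    by (simp add: tests_def)
  have "space (data_space n) - {w \<in> space (data_space n). \<phi> w} = {w \<in> space (data_space n). \<not> \<phi> w}"
    by blast
  moreover have "spike_law r \<in> D_class 1 \<inter> D_tilde"
    using r by (intro spike_law_in_D_class_D_tilde) auto
  moreover have "noise_law \<tau> r \<in> D_class s" "noise_law 0 r \<in> D_class s"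
    using s r \<tau> moment by (auto intro!: noise_law_in_D_class)
  ultimately show "1 - 2 * r * n \<le> type1_err s n p X \<phi> + type2_err s n p X \<tau> \<phi>"
    using null_alternative_error_sum_ge[OF _ _ S, of r p X \<tau>] r \<tau>
      type1_err_ge[of "noise_law \<tau> r" s "spike_law r" n p X "\<lambda>_. 0" "\<lambda>_. 0" \<phi>]
      type2_err_ge[of \<tau> \<tau> "noise_law 0 r" s "spike_law r" n p X "\<lambda>_. 0" "\<lambda>_. 0" \<phi>]
    by fastforce
qed

lemma rate_choice_bounds:
  fixes \<eta> t :: real and n :: nat
  assumes \<eta>: "0 < \<eta>" "\<eta> < 1" and t: "0 \<le> t"
  defines "\<tau> \<equiv> \<eta> / 256 * real n powr (- t / (1 + t))" and "r \<equiv> \<eta> / (8 * (n + 1))"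
  shows "0 \<le> \<tau>" "\<tau> \<le> 1/16" "r * (\<tau> / r) powr (1 + t) \<le> 1/16"
proof -
  have "real n powr (- t / (1 + t)) \<le> 1"
  proof (cases "n = 0")
    case False
    then show ?thesis
      using powr_mono[of "- t / (1 + t)" 0 "real n"] t by simp
  qed simp
  then show "0 \<le> \<tau>" "\<tau> \<le> 1/16"
    using \<eta> mult_mono[of "\<eta> / 256" "1 / 256" "real n powr (- t / (1 + t))" 1] by (auto simp: \<tau>_def)
  have "r * (\<tau> / r) powr (1 + t) \<le> \<eta> / 256"
  proof (cases "n = 0")
    case False
    then show ?thesis
      unfolding \<tau>_def r_def using \<eta> t by (intro rate_moment_le) (auto simp: field_simps)
  qed (use \<eta> in \<open>simp add: \<tau>_def\<close>)
  then show "r * (\<tau> / r) powr (1 + t) \<le> 1/16"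
    using \<eta> by simp
qed

theorem theorem4:
  fixes t :: real
  assumes "0 \<le> t" and "t \<le> 1"
  shows "\<forall>\<eta>::real. 0 < \<eta> \<and> \<eta> < 1 \<longrightarrow>
           (\<exists>c::real. c > 0 \<and>
              (\<forall>(n::nat) (p::nat) (X::nat \<Rightarrow> nat \<Rightarrow> real).
                 minimax_risk (1 + t) n p X (c * real n powr (- t / (1 + t))) \<ge> 1 - \<eta>))"
proof (intro allI impI exI conjI)
  fix \<eta> :: real and n p :: nat and X :: "nat \<Rightarrow> nat \<Rightarrow> real"
  assume \<eta>: "0 < \<eta> \<and> \<eta> < 1"
  show "0 < \<eta> / 256"
    using \<eta> by simp
  define r where "r = \<eta> / (8 * (n + 1))"
  have r: "0 < r" "r \<le> 1/8" "2 * r * n \<le> \<eta>"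
    using \<eta> by (auto simp: r_def field_simps)
  have "1 - 2 * r * n \<le> minimax_risk (1 + t) n p X (\<eta> / 256 * real n powr (- t / (1 + t)))"
    using assms r rate_choice_bounds[of \<eta> t n] \<eta>
    by (intro minimax_risk_two_point_bound) (auto simp: r_def)
  then show "1 - \<eta> \<le> minimax_risk (1 + t) n p X (\<eta> / 256 * real n powr (- t / (1 + t)))"
    using r by linarith
qed

end
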